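(* Let $(P, T, h)$ be an acyclic sensor network and let $P_{\chi}$ be a $\chi$-minimal model of $P$. Let $\widetilde{P}_{\chi} = \{x \in P_{\chi} \mid h(x) \ge 1\}$ with the order induced from $P$. Then \[ \int_{\widetilde{P}_{\chi}} h|_{\widetilde{P}_{\chi}} \, d\chi = \int_{P} h \, d\chi . \]
   Context: For a finite poset $P$, the zeta function is the $P \times P$ matrix with $\zeta(x,y)=1$ if $x \le y$ and $0$ otherwise; it is invertible, and the Euler characteristic is $\chi(P) = \sum_{x,y} \zeta^{-1}(x,y)$ ($\chi(\emptyset)=0$). A filter is an upward-closed subset; $\delta_S$ is the indicator function of $S$. Every $g : P \to \mathbb{Z}$ can be written as $g = \sum_i a_i \delta_{S_i}$ with $a_i \in \mathbb{Z}$ and $S_i$ filters; the Euler calculus is $\int_P g\, d\chi = \sum_i a_i \chi(S_i)$, independent of the representation; for a subposet $S$, $\int_S g|_S\, d\chi$ is computed in the poset $S$. A point $x$ of a finite poset $R$ is a $\chi$-point if $\chi(R_{>x}) = 1$, where $R_{>x} = \{y \in R \mid y > x\}$. A $\chi$-minimal model of $P$ is a subposet obtained from $P$ by repeatedly removing one point that is a $\chi$-point of the current subposet, until no $\chi$-points remain. An acyclic sensor network $(P,T,h)$ consists of a finite poset $P$, a finite set $T$ of targets, which are points of the Hasse diagram of $P$ viewed as a one-dimensional simplicial complex (each target lies at a node or in the interior of an edge), and the counting function $h : P \to \mathbb{Z}_{\ge 0}$, where $h(x)$ is the number of targets lying in the part of the Hasse diagram spanned by the prime ideal $P_{\le x}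 = \{y \in P \mid y \le x\}$ (i.e. at nodes of $P_{\le x}$ or on edges between nodes of $P_{\le x}$). *)

theory Defs
  imports Complex_Main
begin

text \<open>A finite poset is a finite carrier set P of elements of an ordered type,
  with the induced order; subposets are subsets with the induced order.\<close>

definition zeta :: "'a::order \<Rightarrow> 'a \<Rightarrow> int" where
  "zeta x y = (if x \<le> y then 1 else 0)"

definition zeta_inv :: "'a::order set \<Rightarrow> 'a \<Rightarrow> 'a \<Rightarrow> int" where
  "zeta_inv S = (THE m.
      (\<forall>x y. (x \<notin> S \<or> y \<notin> S) \<longrightarrow> m x y = 0) \<and>
      (\<forall>x\<in>S. \<forall>y\<in>S. (\<Sum>z\<in>S. zeta x z * m z y) = (if x = y then 1 else 0)) \<and>
      (\<forall>x\<in>S. \<forall>y\<in>S. (\<Sum>z\<in>S. m x z * zeta z y) = (if x = y then 1 else 0)))"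

definition euler_char :: "'a::order set \<Rightarrow> int" where
  "euler_char S = (\<Sum>x\<in>S. \<Sum>y\<in>S. zeta_inv S x y)"

definition is_upset :: "'a::order set \<Rightarrow> 'a set \<Rightarrow> bool" where
  "is_upset P S \<longleftrightarrow> S \<subseteq> P \<and> (\<forall>x\<in>S. \<forall>y\<in>P. x \<le> y \<longrightarrow> y \<in> S)"

definition indic :: "'a set \<Rightarrow> 'a \<Rightarrow> int" where
  "indic S x = (if x \<in> S then 1 else 0)"

definition euler_integral :: "'a::order set \<Rightarrow> ('a \<Rightarrow> int) \<Rightarrow> int" where
  "euler_integral P g = (THE c. \<exists>rep :: (int \<times> 'a set) list.
      (\<forall>(a, S) \<in> set rep. is_upset P S) \<and>
      (\<forall>x\<in>P. g x = (\<Sum>(a, S) \<leftarrow> rep. a * indic S x)) \<and>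
      c = (\<Sum>(a, S) \<leftarrow> rep. a * euler_char S))"

definition chi_point :: "'a::order set \<Rightarrow> 'a \<Rightarrow> bool" where
  "chi_point R x \<longleftrightarrow> x \<in> R \<and> euler_char {y \<in> R. x < y} = 1"

inductive chi_reduces :: "'a::order set \<Rightarrow> 'a set \<Rightarrow> bool" where
  refl: "chi_reduces R R"
| step: "chi_point R x \<Longrightarrow> chi_reduces (R - {x}) Q \<Longrightarrow> chi_reduces R Q"

definition chi_minimal_model :: "'a::order set \<Rightarrow> 'a set \<Rightarrow> bool" where
  "chi_minimal_model P Q \<longleftrightarrow> chi_reduces P Q \<and> \<not> (\<exists>x. chi_point Q x)"

text \<open>Points of the Hasse diagram: a node, or the point at parameter r \<in> (0,1)
  in the interior of the edge from x to y (x covered by y).\<close>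
datatype 'a hpoint = Node 'a | EdgePt 'a 'a real

definition covers :: "'a::order set \<Rightarrow> 'a \<Rightarrow> 'a \<Rightarrow> bool" where
  "covers P x y \<longleftrightarrow> x \<in> P \<and> y \<in> P \<and> x < y \<and> \<not> (\<exists>z\<in>P. x < z \<and> z < y)"

fun hasse_point :: "'a::order set \<Rightarrow> 'a hpoint \<Rightarrow> bool" where
  "hasse_point P (Node x) = (x \<in> P)"
| "hasse_point P (EdgePt x y r) = (covers P x y \<and> 0 < r \<and> r < 1)"

definition sensor_network :: "'a::order set \<Rightarrow> 'a hpoint set \<Rightarrow> bool" where
  "sensor_network P T \<longleftrightarrow> finite P \<and> finite T \<and> (\<forall>t\<in>T. hasse_point P t)"

fun in_ideal :: "'a::order \<Rightarrow> 'a hpoint \<Rightarrow> bool" where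
  "in_ideal x (Node z) = (z \<le> x)"
| "in_ideal x (EdgePt a b r) = (a \<le> x \<and> b \<le> x)"

definition sensor_count :: "'a::order hpoint set \<Rightarrow> 'a \<Rightarrow> int" where
  "sensor_count T x = int (card {t \<in> T. in_ideal x t})"

end

theory Submission
  imports Defs
begin

text \<open>For a finite poset \<open>S\<close> let \<open>w = \<zeta>\<^sup>-\<^sup>1 1\<close> be the unique integer weight whose sum over every
  principal filter \<open>S\<^sub>\<ge>\<^sub>x\<close> is 1; then \<open>\<chi>(S) = \<Sum> w\<close>. The weight of \<open>S\<close> restricts to the
  weight of every filter \<open>U\<close> of \<open>S\<close>, so \<open>\<chi>(U) = \<Sum>\<^sub>U w\<close>, and the Euler integral of \<open>g\<close> is
  \<open>\<Sum> g w\<close>. At a \<open>\<chi>\<close>-point \<open>x\<close> we get \<open>w x = 1 - \<chi>(S\<^sub>>\<^sub>x) = 0\<close>, so deleting \<open>x\<close> changes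
  neither the weights nor the Euler characteristic of any filter. The counting function
  is \<open>h = \<Sum>\<^sub>t \<delta>\<^sub>F\<^sub>t\<close> with \<open>F\<^sub>t\<close> the filter of points whose ideal contains the target \<open>t\<close>;
  since \<open>h \<ge> 1\<close> on every \<open>F\<^sub>t\<close>, both integrals equal \<open>\<Sum>\<^sub>t \<chi>(F\<^sub>t)\<close>.\<close>

lemma upper_sums_eq_0_imp_eq_0:
  fixes d :: "'a::order \<Rightarrow> 'b::comm_monoid_add"
  assumes fin: "finite S" and sums: "\<And>x. x \<in> S \<Longrightarrow> (\<Sum>z\<in>{z\<in>S. x \<le> z}. d z) = 0"
    and x: "x \<in> S"
  shows "d x = 0"
proof (rule ccontr)
  assume "d x \<noteq> 0"
  then have "{z\<in>S. d z \<noteq> 0} \<noteq> {}" using x by auto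
  then obtain m where m: "m \<in> S" "d m \<noteq> 0" and max: "\<And>z. z \<in> S \<Longrightarrow> d z \<noteq> 0 \<Longrightarrow> m \<le> z \<Longrightarrow> m = z"
    using finite_has_maximal[of "{z\<in>S. d z \<noteq> 0}"] fin by auto
  have "{z\<in>S. m \<le> z} = insert m {z\<in>S. m < z}" using m by auto
  then have "(\<Sum>z\<in>{z\<in>S. m \<le> z}. d z) = d m + (\<Sum>z\<in>{z\<in>S. m < z}. d z)"
    using fin by simp
  also have "(\<Sum>z\<in>{z\<in>S. m < z}. d z) = 0"
    by (rule sum.neutral) (use max in force)
  finally show False using sums m by simp
qed

lemma ex_upper_sums_eq:
  fixes r :: "'a::order \<Rightarrow> 'b::ab_group_add"
  assumes "finite S"
  shows "\<exists>d. \<forall>x\<in>S. (\<Sum>z\<in>{z\<in>S. x \<le> z}. d z) = r x"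
  using assms
proof (induction "card S" arbitrary: S rule: less_induct)
  case less
  show ?case
  proof (cases "S = {}")
    case False
    obtain a where a: "a \<in> S" and min: "\<And>b. b \<in> S \<Longrightarrow> b \<le> a \<Longrightarrow> a = b"
      using finite_has_minimal[OF less.prems False] by auto
    have "card (S - {a}) < card S" using a less.prems by (meson card_Diff1_less)
    then obtain d0 where d0: "\<forall>x\<in>S - {a}. (\<Sum>z\<in>{z\<in>S - {a}. x \<le> z}. d0 z) = r x"
      using less.hyps less.prems by blast
    define d where "d = d0(a := r a - (\<Sum>z\<in>{z\<in>S - {a}. a \<le> z}. d0 z))"
    have d_d0: "(\<Sum>z\<in>{z\<in>S - {a}. x \<le> z}. d z) = (\<Sum>z\<in>{z\<in>S - {a}. x \<le> z}. d0 z)" for x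
      by (rule sum.cong) (auto simp: d_def)
    have "(\<Sum>z\<in>{z\<in>S. x \<le> z}. d z) = r x" if x: "x \<in> S" for x
    proof (cases "x = a")
      case True
      have "{z\<in>S. a \<le> z} = insert a {z\<in>S - {a}. a \<le> z}" using a by auto
      then show ?thesis using True less.prems d_d0 by (simp add: d_def)
    next
      case False
      then have "{z\<in>S. x \<le> z} = {z\<in>S - {a}. x \<le> z}" using min x by auto
      then show ?thesis using d0 d_d0 x False by auto
    qed
    then show ?thesis by blast
  qed simp
qed

lemma sum_zeta_mult:
  assumes "finite S"
  shows "(\<Sum>z\<in>S. zeta x z * f z) = (\<Sum>z\<in>{z\<in>S. x \<le> z}. f z)"
  unfolding sum.inter_filter[OF assms] by (rule sum.cong) (auto simp: zeta_def)

definition zeta_inverse :: "'a::order set \<Rightarrow> ('a \<Rightarrow> 'a \<Rightarrow> int) \<Rightarrow> bool" where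
  "zeta_inverse S m \<longleftrightarrow> (\<forall>x y. (x \<notin> S \<or> y \<notin> S) \<longrightarrow> m x y = 0) \<and>
      (\<forall>x\<in>S. \<forall>y\<in>S. (\<Sum>z\<in>S. zeta x z * m z y) = (if x = y then 1 else 0)) \<and>
      (\<forall>x\<in>S. \<forall>y\<in>S. (\<Sum>z\<in>S. m x z * zeta z y) = (if x = y then 1 else 0))"

lemma ex_zeta_inverse:
  fixes S :: "'a::order set"
  assumes fin: "finite S"
  shows "\<exists>m. zeta_inverse S m"
proof -
  have "\<forall>y. \<exists>d. \<forall>x\<in>S. (\<Sum>z\<in>{z\<in>S. x \<le> z}. d z) = (if x = y then 1 else 0 :: int)"
    by (intro allI ex_upper_sums_eq[OF fin])
  from choice[OF this] obtain D :: "'a \<Rightarrow> 'a \<Rightarrow> int"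
    where D: "\<forall>y. \<forall>x\<in>S. (\<Sum>z\<in>{z\<in>S. x \<le> z}. D y z) = (if x = y then 1 else 0)"
    by blast
  define m where "m x y = (if x \<in> S \<and> y \<in> S then D y x else 0)" for x y
  have right: "(\<Sum>z\<in>S. zeta x z * m z y) = (if x = y then 1 else 0)" if "x \<in> S" "y \<in> S" for x y
  proof -
    have "(\<Sum>z\<in>S. zeta x z * m z y) = (\<Sum>z\<in>{z\<in>S. x \<le> z}. D y z)"
      unfolding sum_zeta_mult[OF fin] by (rule sum.cong) (auto simp: m_def that)
    then show ?thesis using D that(1) by simp
  qed
  have left: "(\<Sum>z\<in>S. m x z * zeta z y) = (if x = y then 1 else 0)" if "x \<in> S" "y \<in> S" for x y
  proof -
    \<comment> \<open>\<open>\<zeta> (m \<zeta>) = (\<zeta> m) \<zeta> = \<zeta>\<close>, and \<open>\<zeta>\<close> is injective on columns.\<close>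
    define c where "c u = (\<Sum>z\<in>S. m u z * zeta z y) - (if u = y then 1 else 0)" for u
    have "(\<Sum>u\<in>{u\<in>S. v \<le> u}. c u) = 0" if v: "v \<in> S" for v
    proof -
      have "(\<Sum>u\<in>{u\<in>S. v \<le> u}. \<Sum>z\<in>S. m u z * zeta z y)
          = (\<Sum>z\<in>S. (\<Sum>u\<in>S. zeta v u * m u z) * zeta z y)"
        unfolding sum_zeta_mult[OF fin, symmetric] sum_distrib_left sum_distrib_right
        by (subst sum.swap) (simp add: mult.assoc)
      also have "\<dots> = (\<Sum>z\<in>S. if v = z then zeta z y else 0)"
        by (rule sum.cong) (auto simp: right v)
      also have "\<dots> = (\<Sum>u\<in>{u\<in>S. v \<le> u}. if u = y then 1 else 0)"
        using fin v \<open>y \<in> S\<close> by (simp add: zeta_def)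
      finally show ?thesis unfolding c_def sum_subtractf by simp
    qed
    from upper_sums_eq_0_imp_eq_0[OF fin this that(1)] show ?thesis by (simp add: c_def)
  qed
  have "zeta_inverse S m" unfolding zeta_inverse_def using right left by (auto simp: m_def)
  then show ?thesis by blast
qed

lemma zeta_inverse_unique:
  assumes fin: "finite S" and m1: "zeta_inverse S m1" and m2: "zeta_inverse S m2"
  shows "m1 = m2"
proof (intro ext)
  fix x y
  show "m1 x y = m2 x y"
  proof (cases "x \<in> S \<and> y \<in> S")
    case True
    have "(\<Sum>z\<in>{z\<in>S. u \<le> z}. m1 z y - m2 z y) = 0" if "u \<in> S" for u
      using m1 m2 that True
      unfolding sum_subtractf sum_zeta_mult[OF fin, symmetric] zeta_inverse_def by simp
    from upper_sums_eq_0_imp_eq_0[OF fin this] True show ?thesis by simp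
  qed (use m1 m2 in \<open>auto simp: zeta_inverse_def\<close>)
qed

lemma zeta_inverse_zeta_inv:
  assumes "finite S"
  shows "zeta_inverse S (zeta_inv S)"
proof -
  have "\<exists>!m. zeta_inverse S m" using ex_zeta_inverse zeta_inverse_unique assms by blast
  from theI'[OF this] show ?thesis unfolding zeta_inv_def zeta_inverse_def[abs_def] by simp
qed

definition euler_weight :: "'a::order set \<Rightarrow> ('a \<Rightarrow> int) \<Rightarrow> bool" where
  "euler_weight S w \<longleftrightarrow> (\<forall>x\<in>S. (\<Sum>z\<in>{z\<in>S. x \<le> z}. w z) = 1)"

lemma euler_weight_unique:
  assumes "finite S" "euler_weight S w" "euler_weight S w'" "x \<in> S"
  shows "w x = w' x"
  using upper_sums_eq_0_imp_eq_0[of S "\<lambda>z. w z - w' z"] assms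
  by (simp add: euler_weight_def sum_subtractf)

lemma euler_weight_row_sums:
  assumes fin: "finite S"
  shows "euler_weight S (\<lambda>x. \<Sum>y\<in>S. zeta_inv S x y)"
  unfolding euler_weight_def
proof
  fix x assume x: "x \<in> S"
  have "(\<Sum>z\<in>{z\<in>S. x \<le> z}. \<Sum>y\<in>S. zeta_inv S z y) = (\<Sum>y\<in>S. \<Sum>z\<in>S. zeta x z * zeta_inv S z y)"
    unfolding sum_zeta_mult[OF fin, symmetric] sum_distrib_left by (rule sum.swap)
  also have "\<dots> = (\<Sum>y\<in>S. if x = y then 1 else 0)"
    using zeta_inverse_zeta_inv[OF fin] x by (intro sum.cong) (auto simp: zeta_inverse_def)
  finally show "(\<Sum>z\<in>{z\<in>S. x \<le> z}. \<Sum>y\<in>S. zeta_inv S z y) = 1" using x fin by simp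
qed

lemma ex_euler_weight: "finite S \<Longrightarrow> \<exists>w. euler_weight S w"
  using euler_weight_row_sums by blast

lemma euler_char_eq_sum_weight:
  assumes "finite S" "euler_weight S w"
  shows "euler_char S = sum w S"
  unfolding euler_char_def
  using euler_weight_unique[OF assms(1) euler_weight_row_sums[OF assms(1)] assms(2)]
  by (intro sum.cong) auto

lemma euler_weight_upset:
  assumes "euler_weight S w" "is_upset S U"
  shows "euler_weight U w"
proof -
  have "{z\<in>U. x \<le> z} = {z\<in>S. x \<le> z}" if "x \<in> U" for x
    using assms(2) that unfolding is_upset_def by blast
  then show ?thesis using assms unfolding euler_weight_def is_upset_def by auto
qed

lemma euler_char_upset_eq_sum_weight:
  assumes "finite S" "euler_weight S w" "is_upset S U"
  shows "euler_char U = sum w U"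
proof (rule euler_char_eq_sum_weight)
  show "finite U" using assms(1,3) finite_subset unfolding is_upset_def by blast
qed (rule euler_weight_upset[OF assms(2,3)])

lemma euler_weight_chi_point:
  assumes fin: "finite S" and w: "euler_weight S w" and x: "chi_point S x"
  shows "w x = 0"
proof -
  have "is_upset S {y\<in>S. x < y}" by (auto simp: is_upset_def)
  then have "sum w {y\<in>S. x < y} = 1"
    using euler_char_upset_eq_sum_weight[OF fin w] x by (simp add: chi_point_def)
  moreover have "{z\<in>S. x \<le> z} = insert x {y\<in>S. x < y}" using x by (auto simp: chi_point_def)
  then have "sum w {z\<in>S. x \<le> z} = w x + sum w {y\<in>S. x < y}" using fin by simp
  moreover have "sum w {z\<in>S. x \<le> z} = 1" using w x by (simp add: euler_weight_def chi_point_def)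
  ultimately show ?thesis by simp
qed

lemma euler_weight_Diff_zero:
  assumes "finite S" "euler_weight S w" "w x = 0"
  shows "euler_weight (S - {x}) w"
proof -
  have "{z\<in>S - {x}. u \<le> z} = {z\<in>S. u \<le> z} - {x}" for u by auto
  then show ?thesis using assms by (simp add: euler_weight_def sum_diff1)
qed

lemma euler_char_upset_remove_chi_point:
  assumes fin: "finite R" and x: "chi_point R x" and U: "is_upset R U"
  shows "euler_char (U - {x}) = euler_char U"
proof -
  obtain w where w: "euler_weight R w" using ex_euler_weight[OF fin] ..
  have wx: "w x = 0" by (rule euler_weight_chi_point[OF fin w x])
  have "finite (R - {x})" using fin by simp
  moreover have "is_upset (R - {x}) (U - {x})" using U by (auto simp: is_upset_def)
  ultimately have "euler_char (U - {x}) = sum w (U - {x})"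
    by (rule euler_char_upset_eq_sum_weight[OF _ euler_weight_Diff_zero[OF fin w wx]])
  also have "\<dots> = sum w U"
    using wx finite_subset[OF _ fin] U by (simp add: is_upset_def sum_diff1)
  also have "\<dots> = euler_char U" using euler_char_upset_eq_sum_weight[OF fin w U] ..
  finally show ?thesis .
qed

lemma chi_reduces_subset: "chi_reduces R Q \<Longrightarrow> Q \<subseteq> R"
  by (induction rule: chi_reduces.induct) auto

lemma chi_reduces_euler_char_upset:
  assumes "chi_reduces R Q" "finite R" "is_upset R U"
  shows "euler_char (U \<inter> Q) = euler_char U"
  using assms
proof (induction arbitrary: U rule: chi_reduces.induct)
  case (refl R)
  then have "U \<inter> R = U" by (auto simp: is_upset_def)
  then show ?case by simp
next
  case (step R x Q)
  have upset: "is_upset (R - {x}) (U - {x})" using step.prems(2) by (auto simp: is_upset_def)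
  have "U \<inter> Q = (U - {x}) \<inter> Q" using chi_reduces_subset[OF step.hyps(2)] by blast
  then have "euler_char (U \<inter> Q) = euler_char ((U - {x}) \<inter> Q)" by simp
  also have "\<dots> = euler_char (U - {x})"
    using step.IH[OF _ upset] step.prems(1) by simp
  also have "\<dots> = euler_char U"
    by (rule euler_char_upset_remove_chi_point[OF step.prems(1) step.hyps(1) step.prems(2)])
  finally show ?case .
qed

lemma sum_indic_mult_weight:
  assumes "finite P" "euler_weight P w" "is_upset P S"
  shows "(\<Sum>x\<in>P. indic S x * w x) = euler_char S"
proof -
  have "(\<Sum>x\<in>P. indic S x * w x) = sum w (P \<inter> S)"
    unfolding sum.inter_restrict[OF assms(1)] by (rule sum.cong) (auto simp: indic_def)
  also have "P \<inter> S = S" using assms(3) by (auto simp: is_upset_def)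
  finally show ?thesis using euler_char_upset_eq_sum_weight[OF assms] by simp
qed

lemma sum_rep_mult_weight:
  assumes "finite P" "euler_weight P w" "\<forall>(a, S) \<in> set rep. is_upset P S"
  shows "(\<Sum>x\<in>P. (\<Sum>(a, S) \<leftarrow> rep. a * indic S x) * w x) = (\<Sum>(a, S) \<leftarrow> rep. a * euler_char S)"
  using assms(3)
proof (induction rep)
  case (Cons p rep)
  obtain a S where p: "p = (a, S)" by fastforce
  have "(\<Sum>x\<in>P. (\<Sum>(a, S) \<leftarrow> p # rep. a * indic S x) * w x)
      = (\<Sum>x\<in>P. a * (indic S x * w x) + (\<Sum>(a, S) \<leftarrow> rep. a * indic S x) * w x)"
    by (rule sum.cong) (auto simp: p algebra_simps)
  also have "\<dots> = a * (\<Sum>x\<in>P. indic S x * w x) + (\<Sum>x\<in>P. (\<Sum>(a, S) \<leftarrow> rep. a * indic S x) * w x)"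
    by (simp add: sum.distrib sum_distrib_left)
  also have "\<dots> = (\<Sum>(a, S) \<leftarrow> p # rep. a * euler_char S)"
    using Cons sum_indic_mult_weight[OF assms(1,2), of S] p by simp
  finally show ?case .
qed simp

lemma euler_integral_eq:
  assumes fin: "finite P" and rep: "\<forall>(a, S) \<in> set rep. is_upset P S"
    and g: "\<forall>x\<in>P. g x = (\<Sum>(a, S) \<leftarrow> rep. a * indic S x)"
  shows "euler_integral P g = (\<Sum>(a, S) \<leftarrow> rep. a * euler_char S)"
proof -
  obtain w where w: "euler_weight P w" using ex_euler_weight[OF fin] ..
  \<comment> \<open>Every representation yields \<open>\<Sum> g w\<close>, so the value is independent of it.\<close>
  have any_rep: "(\<Sum>(a, S) \<leftarrow> rep'. a * euler_char S) = (\<Sum>x\<in>P. g x * w x)"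
    if "\<forall>(a, S) \<in> set rep'. is_upset P S" "\<forall>x\<in>P. g x = (\<Sum>(a, S) \<leftarrow> rep'. a * indic S x)"
    for rep' :: "(int \<times> 'a set) list"
    using sum_rep_mult_weight[OF fin w that(1)] that(2) by simp
  show ?thesis
    unfolding euler_integral_def
  proof (rule the_equality)
    fix c assume "\<exists>rep'. (\<forall>(a, S) \<in> set rep'. is_upset P S) \<and>
        (\<forall>x\<in>P. g x = (\<Sum>(a, S) \<leftarrow> rep'. a * indic S x)) \<and> c = (\<Sum>(a, S) \<leftarrow> rep'. a * euler_char S)"
    then obtain rep' where "\<forall>(a, S) \<in> set rep'. is_upset P S"
        "\<forall>x\<in>P. g x = (\<Sum>(a, S) \<leftarrow> rep'. a * indic S x)" "c = (\<Sum>(a, S) \<leftarrow> rep'. a * euler_char S)"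
      by blast
    with any_rep[OF rep g] show "c = (\<Sum>(a, S) \<leftarrow> rep. a * euler_char S)"
      using any_rep by simp
  qed (rule exI[of _ rep], simp add: rep g)
qed

lemma is_upset_in_ideal: "is_upset D {x\<in>D. in_ideal x t}"
  unfolding is_upset_def by (cases t) auto

lemma euler_integral_sensor_count:
  assumes fin: "finite D" and finT: "finite T"
  shows "euler_integral D (sensor_count T) = (\<Sum>t\<in>T. euler_char {x\<in>D. in_ideal x t})"
proof -
  obtain ts where ts: "set ts = T" "distinct ts" using finite_distinct_list[OF finT] by blast
  let ?rep = "map (\<lambda>t. (1::int, {x\<in>D. in_ideal x t})) ts"
  have count: "\<forall>x\<in>D. sensor_count T x = (\<Sum>(a, S) \<leftarrow> ?rep. a * indic S x)"
  proof
    fix x assume "x \<in> D"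
    have "(\<Sum>(a, S) \<leftarrow> ?rep. a * indic S x) = (\<Sum>t\<in>T. if in_ideal x t then 1 else 0)"
      using ts \<open>x \<in> D\<close> by (simp add: o_def sum_list_distinct_conv_sum_set indic_def)
    also have "\<dots> = sensor_count T x"
      unfolding sensor_count_def sum.inter_filter[OF finT, symmetric] by simp
    finally show "sensor_count T x = (\<Sum>(a, S) \<leftarrow> ?rep. a * indic S x)" ..
  qed
  have "euler_integral D (sensor_count T) = (\<Sum>(a, S) \<leftarrow> ?rep. a * euler_char S)"
    by (rule euler_integral_eq[OF fin _ count]) (auto simp: is_upset_in_ideal)
  then show ?thesis using ts by (simp add: o_def sum_list_distinct_conv_sum_set)
qed

lemma sensor_count_ge_1:
  assumes "finite T" "t \<in> T" "in_ideal x t"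
  shows "sensor_count T x \<ge> 1"
proof -
  have "{s \<in> T. in_ideal x s} \<noteq> {}" using assms(2,3) by blast
  then have "card {s \<in> T. in_ideal x s} > 0" using assms(1) by (simp add: card_gt_0_iff)
  then show ?thesis by (simp add: sensor_count_def)
qed

theorem theorem4p11:
  fixes P Q :: "'a::order set" and T :: "'a hpoint set"
  assumes "sensor_network P T"
    and "chi_minimal_model P Q"
  shows "euler_integral {x \<in> Q. sensor_count T x \<ge> 1} (sensor_count T)
         = euler_integral P (sensor_count T)"
proof -
  have finP: "finite P" and finT: "finite T" using assms(1) by (auto simp: sensor_network_def)
  have red: "chi_reduces P Q" using assms(2) by (simp add: chi_minimal_model_def)
  let ?D = "{x \<in> Q. sensor_count T x \<ge> 1}"
  have finD: "finite ?D" by (rule finite_subset[OF _ finP]) (use chi_reduces_subset[OF red] in blast)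
  have "euler_char {x\<in>?D. in_ideal x t} = euler_char {x\<in>P. in_ideal x t}" if "t \<in> T" for t
  proof -
    have "{x\<in>?D. in_ideal x t} = {x\<in>P. in_ideal x t} \<inter> Q"
      using sensor_count_ge_1[OF finT that] chi_reduces_subset[OF red] by blast
    then show ?thesis using chi_reduces_euler_char_upset[OF red finP is_upset_in_ideal] by simp
  qed
  then have "euler_integral ?D (sensor_count T) = (\<Sum>t\<in>T. euler_char {x\<in>P. in_ideal x t})"
    unfolding euler_integral_sensor_count[OF finD finT] by (rule sum.cong[OF HOL.refl])
  also have "\<dots> = euler_integral P (sensor_count T)"
    by (rule euler_integral_sensor_count[OF finP finT, symmetric])
  finally show ?thesis .
qed

end
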